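(* Let $V$ be an infinite-dimensional complex Hilbert space. Then in the bosonic Fock space $S[V]$, the domain $\mathcal{D}[N^{\frac{1}{2}}]$ is properly contained in the maximal common domain $\bigcap_{v \in V} \big(\mathcal{D}[c(v)] \cap \mathcal{D}[a(v)]\big)$ of all creators and annihilators.
   Context: Let $V$ be a complex Hilbert space with inner product $\langle \cdot \vert \cdot \rangle$ (antilinear in the first slot). Let $SV = \bigoplus_{n \geq 0} S^n V$ be the (algebraic) symmetric algebra, with inner product making the $S^n V$ mutually perpendicular and $\langle x_1 \cdots x_n \vert y_1 \cdots y_n \rangle = \sum_{p} \prod_{j=1}^n \langle x_j \vert y_{p(j)} \rangle$ (sum over permutations $p$ of $\{1,\dots,n\}$). The bosonic Fock space $S[V] = \bigoplus_{n \geq 0} S^n[V]$ is the Hilbert space completion, $S^n[V]$ being the closure of $S^n V$. Let $SV'$ be the space of all antilinear functionals $SV \to \mathbf{C}$; $SV$ embeds in $SV'$ via $\phi \mapsto \langle \cdot \vert \phi \rangle$, and $S[V]$ is identified with the subspace of bounded antilinear functionals. For $v \in V$, the creator $c(v)$ on $SV$ is multiplication by $v$, and the annihilator $a(v)$ on $SV$ is the derivation with $a(v)\mathbf{1} = 0$ and $a(v)(v_1 \cdots v_n) = \sum_{j=1}^n \langle v \vert v_j \rangle v_1 \cdots \widehat{v_j} \cdots v_n$. They extend to $SV'$ by $[c(v)\Phi](\psi) = \Phi[a(v)\psi]$ and $[a(v)\Phi](\psi) = \Phi[c(v)\psi]$ for $\psi \in SV$. The operators in Fock space have domains $\mathcal{D}[c(v)]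 = \{\Phi \in S[V] : c(v)\Phi \in S[V]\}$ and $\mathcal{D}[a(v)] = \{\Phi \in S[V] : a(v)\Phi \in S[V]\}$ (these coincide). The number operator $N$ acts as $nI$ on $S^n[V]$; writing $\Phi = \sum_{n \geq 0} \Phi_n$ with $\Phi_n \in S^n[V]$, $\mathcal{D}[N^{\frac{1}{2}}] = \{\Phi \in S[V] : \sum_{n \geq 0} n \Vert \Phi_n \Vert^2 < \infty\}$. *)

theory Defs
  imports "HOL-Analysis.Analysis" "HOL-Combinatorics.Permutations"
begin

class complex_inner_space = ab_group_add +
  fixes scaleC :: "complex \<Rightarrow> 'a \<Rightarrow> 'a" (infixr \<open>*\<^sub>C\<close> 75)
    and cinner :: "'a \<Rightarrow> 'a \<Rightarrow> complex"
  assumes scaleC_add_right: "a *\<^sub>C (x + y) = a *\<^sub>C x + a *\<^sub>C y"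
    and scaleC_add_left: "(a + b) *\<^sub>C x = a *\<^sub>C x + b *\<^sub>C x"
    and scaleC_scaleC: "a *\<^sub>C (b *\<^sub>C x) = (a * b) *\<^sub>C x"
    and scaleC_one: "1 *\<^sub>C x = x"
    and cinner_cnj_commute: "cinner x y = cnj (cinner y x)"
    and cinner_add_right: "cinner x (y + z) = cinner x y + cinner x z"
    and cinner_scaleC_right: "cinner x (a *\<^sub>C y) = a * cinner x y"
    and cinner_ge_zero: "0 \<le> Re (cinner x x)"
    and cinner_eq_zero_iff: "cinner x x = 0 \<longleftrightarrow> x = 0"

definition cnorm :: "'a::complex_inner_space \<Rightarrow> real" where
  "cnorm x = sqrt (Re (cinner x x))"

class complex_hilbert_space = complex_inner_space +
  assumes cauchy_convergent:
    "(\<forall>e>0. \<exists>N::nat. \<forall>m\<ge>N. \<forall>n\<ge>N. sqrt (Re (cinner (X m - X n) (X m - X n))) < e) \<Longrightarrow>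
     (\<exists>L. \<forall>e>0. \<exists>N. \<forall>n\<ge>N. sqrt (Re (cinner (X n - L) (X n - L))) < e)"

definition cspan :: "'a::complex_inner_space set \<Rightarrow> 'a set" where
  "cspan S = {\<Sum>s\<in>T. c s *\<^sub>C s | T c. finite T \<and> T \<subseteq> S}"

definition infinite_dimensional :: "'a::complex_inner_space itself \<Rightarrow> bool" where
  "infinite_dimensional _ \<longleftrightarrow> (\<forall>S::'a set. finite S \<longrightarrow> cspan S \<noteq> UNIV)"

text \<open>An element of SV is represented by a finite formal linear combination of
monomials v_1 \<cdots> v_n, i.e. a list of pairs (coefficient, list of factors).\<close>

type_synonym 'v sv = "(complex \<times> 'v list) list"

definition mono_ip :: "'v::complex_inner_space list \<Rightarrow> 'v list \<Rightarrow> complex" where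
  "mono_ip xs ys =
     (if length xs = length ys then
        (\<Sum>p\<in>{p. p permutes {..<length xs}}. \<Prod>j<length xs. cinner (xs ! j) (ys ! p j))
      else 0)"

definition sv_ip :: "'v::complex_inner_space sv \<Rightarrow> 'v sv \<Rightarrow> complex" where
  "sv_ip \<phi> \<psi> = (\<Sum>(c, xs)\<leftarrow>\<phi>. \<Sum>(d, ys)\<leftarrow>\<psi>. cnj c * d * mono_ip xs ys)"

definition sv_norm :: "'v::complex_inner_space sv \<Rightarrow> real" where
  "sv_norm \<psi> = sqrt (Re (sv_ip \<psi> \<psi>))"

text \<open>An antilinear functional on SV is determined by its values on monomials;
these values form a function on lists that is symmetric and antilinear in each
slot (universal property of the symmetric powers).  Conversely each such function
defines a unique antilinear functional on SV.  So SV' is represented by:\<close>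

definition sv_antidual :: "('v::complex_inner_space list \<Rightarrow> complex) \<Rightarrow> bool" where
  "sv_antidual F \<longleftrightarrow>
     (\<forall>xs ys. mset xs = mset ys \<longrightarrow> F xs = F ys) \<and>
     (\<forall>xs ys a b x y. F (xs @ (a *\<^sub>C x + b *\<^sub>C y) # ys) =
                       cnj a * F (xs @ x # ys) + cnj b * F (xs @ y # ys))"

definition sv_eval :: "('v list \<Rightarrow> complex) \<Rightarrow> 'v sv \<Rightarrow> complex" where
  "sv_eval F \<psi> = (\<Sum>(c, xs)\<leftarrow>\<psi>. cnj c * F xs)"

text \<open>Bounded antilinear functionals = elements of the Fock space S[V].\<close>
definition fock :: "('v::complex_inner_space list \<Rightarrow> complex) set" where
  "fock = {F. sv_antidual F \<and> (\<exists>C. \<forall>\<psi>. cmod (sv_eval F \<psi>) \<le> C * sv_norm \<psi>)}"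

text \<open>[c(v)F](\<psi>) = F(a(v)\<psi>) and [a(v)F](\<psi>) = F(c(v)\<psi>), on monomials.\<close>
definition creator :: "'v::complex_inner_space \<Rightarrow> ('v list \<Rightarrow> complex) \<Rightarrow> ('v list \<Rightarrow> complex)" where
  "creator v F xs = (\<Sum>j<length xs. cinner (xs ! j) v * F (take j xs @ drop (Suc j) xs))"

definition annihilator :: "'v::complex_inner_space \<Rightarrow> ('v list \<Rightarrow> complex) \<Rightarrow> ('v list \<Rightarrow> complex)" where
  "annihilator v F xs = F (v # xs)"

definition dom_creator :: "'v::complex_inner_space \<Rightarrow> ('v list \<Rightarrow> complex) set" where
  "dom_creator v = {F \<in> fock. creator v F \<in> fock}"

definition dom_annihilator :: "'v::complex_inner_space \<Rightarrow> ('v list \<Rightarrow> complex) set" where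
  "dom_annihilator v = {F \<in> fock. annihilator v F \<in> fock}"

text \<open>Norm of the degree-n component \<Phi>_n of \<Phi> (as a functional on S^n V).\<close>
definition comp_norm :: "('v::complex_inner_space list \<Rightarrow> complex) \<Rightarrow> nat \<Rightarrow> real" where
  "comp_norm F n = Sup {cmod (sv_eval F \<psi>) | \<psi>.
      (\<forall>(c, xs)\<in>set \<psi>. length xs = n) \<and> sv_norm \<psi> \<le> 1}"

definition dom_N_half :: "('v::complex_inner_space list \<Rightarrow> complex) set" where
  "dom_N_half = {F \<in> fock. summable (\<lambda>n. real n * (comp_norm F n)\<^sup>2)}"

end

theory Submission
  imports Defs
begin

text \<open>
  On homogeneous elements \<open>\<psi>\<close> of degree \<open>n\<close> whose factors lie in the span of an orthonormal
  list \<open>e\<^sub>1, \<dots>, e\<^sub>k\<close>, the number operator is \<open>\<Sum>\<^sub>j c(e\<^sub>j) a(e\<^sub>j)\<close>, so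
  \<open>n \<parallel>\<psi>\<parallel>\<^sup>2 = \<Sum>\<^sub>j \<parallel>a(e\<^sub>j) \<psi>\<parallel>\<^sup>2\<close>.  By induction on \<open>n\<close> this makes the inner product of \<open>SV\<close>
  positive semidefinite, and choosing \<open>e\<^sub>1 = v/\<parallel>v\<parallel>\<close> it gives
  \<open>\<parallel>a(v) \<psi>\<parallel>\<^sup>2 \<le> n \<parallel>v\<parallel>\<^sup>2 \<parallel>\<psi>\<parallel>\<^sup>2\<close>; with the commutation relation also
  \<open>\<parallel>c(v) \<psi>\<parallel>\<^sup>2 \<le> (n + 1) \<parallel>v\<parallel>\<^sup>2 \<parallel>\<psi>\<parallel>\<^sup>2\<close>.  Hence, if \<open>\<Sum> n \<parallel>\<Phi>\<^sub>n\<parallel>\<^sup>2 < \<infinity>\<close>, then \<open>a(v) \<Phi>\<close> and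
  \<open>c(v) \<Phi>\<close> are bounded degree by degree with square-summable bounds, so they lie in the Fock space.

  For the strict inclusion take an orthonormal sequence \<open>(e\<^sub>n)\<close> and \<open>\<Phi>\<^sub>n = e\<^sub>n\<^sup>n / (n \<surd>n!)\<close>.
  Then \<open>\<parallel>\<Phi>\<^sub>n\<parallel> = 1/n\<close>, so \<open>\<Sum> n \<parallel>\<Phi>\<^sub>n\<parallel>\<^sup>2\<close> is the harmonic series, while
  \<open>\<parallel>a(v) \<Phi>\<^sub>n\<parallel> \<le> |\<langle>e\<^sub>n|v\<rangle>|\<close> is square-summable by Bessel's inequality and
  \<open>\<parallel>c(v) \<Phi>\<^sub>n\<parallel>\<^sup>2 = \<parallel>a(v) \<Phi>\<^sub>n\<parallel>\<^sup>2 + \<parallel>v\<parallel>\<^sup>2 / n\<^sup>2\<close>.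
\<close>

lemma cinner_add_left: "cinner (x + y) z = cinner x z + cinner y (z::'a::complex_inner_space)"
  using cinner_cnj_commute[of "x + y" z] cinner_cnj_commute[of x z] cinner_cnj_commute[of y z]
  by (simp add: cinner_add_right)

lemma cinner_scaleC_left: "cinner (a *\<^sub>C x) (y::'a::complex_inner_space) = cnj a * cinner x y"
  using cinner_cnj_commute[of "a *\<^sub>C x" y] cinner_cnj_commute[of x y]
  by (simp add: cinner_scaleC_right)

lemma cnj_cinner: "cnj (cinner x y) = cinner y (x::'a::complex_inner_space)"
  by (simp add: cinner_cnj_commute[of y x])

lemma cinner_diff_right: "cinner x (y - z) = cinner x y - cinner (x::'a::complex_inner_space) z"
  using cinner_add_right[of x "y - z" z] by (simp add: eq_diff_eq)

lemma cinner_diff_left: "cinner (x - y) z = cinner x z - cinner y (z::'a::complex_inner_space)"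
  using cinner_add_left[of "x - y" y z] by (simp add: eq_diff_eq)

lemma cinner_zero_right [simp]: "cinner (x::'a::complex_inner_space) 0 = 0"
  using cinner_add_right[of x 0 0] by simp

lemma cinner_zero_left [simp]: "cinner 0 (x::'a::complex_inner_space) = 0"
  using cinner_add_left[of 0 0 x] by simp

lemma cinner_sum_right: "cinner (x::'a::complex_inner_space) (\<Sum>i\<in>A. f i) = (\<Sum>i\<in>A. cinner x (f i))"
  by (induction A rule: infinite_finite_induct) (simp_all add: cinner_add_right)

lemma cinner_sum_scaleC_right:
  "cinner (x::'a::complex_inner_space) (\<Sum>i\<in>A. c i *\<^sub>C f i) = (\<Sum>i\<in>A. c i * cinner x (f i))"
  by (simp add: cinner_sum_right cinner_scaleC_right)

lemma scaleC_zero_left [simp]: "0 *\<^sub>C (x::'a::complex_inner_space) = 0"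
  using scaleC_add_left[of 0 0 x] by simp

lemma cinner_self_eq_cnorm: "cinner (x::'a::complex_inner_space) x = complex_of_real ((cnorm x)\<^sup>2)"
proof -
  have "Im (cinner x x) = 0"
    using cinner_cnj_commute[of x x] by (metis cnj.sel(2) neg_equal_zero)
  then show ?thesis
    using cinner_ge_zero[of x] by (simp add: cnorm_def complex_eq_iff)
qed

lemma cnorm_nonneg: "0 \<le> cnorm (x::'a::complex_inner_space)"
  by (simp add: cnorm_def cinner_ge_zero)

lemma cnorm_eq_zero_iff: "cnorm x = 0 \<longleftrightarrow> x = (0::'a::complex_inner_space)"
  using cinner_self_eq_cnorm[of x] cinner_eq_zero_iff[of x] by auto

lemma cnorm_pos: "x \<noteq> 0 \<Longrightarrow> 0 < cnorm (x::'a::complex_inner_space)"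
  using cnorm_nonneg[of x] cnorm_eq_zero_iff[of x] by linarith

lemma cinner_normalize_self:
  assumes "x \<noteq> 0"
  shows "cinner (complex_of_real (1 / cnorm x) *\<^sub>C x) (complex_of_real (1 / cnorm x) *\<^sub>C x) = 1"
proof -
  have "cinner x x = complex_of_real ((cnorm x)\<^sup>2)"
    by (rule cinner_self_eq_cnorm)
  then show ?thesis
    using cnorm_pos[OF assms] by (simp add: cinner_scaleC_left cinner_scaleC_right power2_eq_square)
qed

definition remove_nth :: "nat \<Rightarrow> 'a list \<Rightarrow> 'a list" where
  "remove_nth j xs = take j xs @ drop (Suc j) xs"

lemma length_remove_nth [simp]: "j < length xs \<Longrightarrow> length (remove_nth j xs) = length xs - 1"
  by (simp add: remove_nth_def)

lemma remove_nth_Cons_0 [simp]: "remove_nth 0 (x # xs) = xs"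
  by (simp add: remove_nth_def)

lemma remove_nth_Cons_Suc [simp]: "remove_nth (Suc j) (x # xs) = x # remove_nth j xs"
  by (simp add: remove_nth_def)

lemma mset_remove_nth: "j < length xs \<Longrightarrow> mset (remove_nth j xs) = mset xs - {#xs ! j#}"
proof -
  assume "j < length xs"
  then have "mset xs = add_mset (xs ! j) (mset (remove_nth j xs))"
    by (metis remove_nth_def id_take_nth_drop mset.simps(2) mset_append union_mset_add_mset_right)
  then show ?thesis by simp
qed

lemma remove_nth_replicate: "j < n \<Longrightarrow> remove_nth j (replicate n x) = replicate (n - 1) x"
  by (simp add: remove_nth_def replicate_add[symmetric])

lemma mono_ip_length_neq: "length xs \<noteq> length ys \<Longrightarrow> mono_ip xs ys = 0"
  by (simp add: mono_ip_def)

lemma mono_ip_Nil [simp]: "mono_ip [] [] = 1"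
  by (simp add: mono_ip_def)

lemma mono_ip_mset_left:
  assumes "mset xs = mset xs'"
  shows "mono_ip xs ys = mono_ip xs' ys"
proof (cases "length xs = length ys")
  case False
  then show ?thesis
    using assms by (metis mono_ip_length_neq size_mset)
next
  case True
  let ?n = "length xs"
  let ?P = "{p. p permutes {..<?n}}"
  obtain s where s: "s permutes {..<?n}" "permute_list s xs = xs'"
    using mset_eq_permutation[of xs' xs] assms by metis
  have "mono_ip xs' ys = (\<Sum>p\<in>?P. \<Prod>j<?n. cinner (xs ! s j) (ys ! p j))"
    unfolding mono_ip_def using True s
    by (auto simp: s(2)[symmetric] permute_list_nth intro!: sum.cong prod.cong)
  also have "\<dots> = (\<Sum>p\<in>?P. \<Prod>j<?n. cinner (xs ! j) (ys ! (p \<circ> inv s) j))"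
    using prod.permutes_inv[OF s(1), of "\<lambda>a j. cinner (xs ! a) (ys ! p j)" for p] by simp
  also have "\<dots> = (\<Sum>p\<in>?P. \<Prod>j<?n. cinner (xs ! j) (ys ! p j))"
    using sum_permutations_compose_right[OF permutes_inv[OF s(1)],
        of "\<lambda>p. \<Prod>j<?n. cinner (xs ! j) (ys ! p j)"] by simp
  also have "\<dots> = mono_ip xs ys"
    unfolding mono_ip_def using True by simp
  finally show ?thesis by simp
qed

lemma mono_ip_commute: "mono_ip ys xs = cnj (mono_ip xs ys)"
proof (cases "length xs = length ys")
  case False
  then show ?thesis by (simp add: mono_ip_def)
next
  case True
  let ?n = "length xs"
  let ?P = "{p. p permutes {..<?n}}"
  have "cnj (mono_ip xs ys) = (\<Sum>p\<in>?P. \<Prod>j<?n. cinner (ys ! p j) (xs ! j))"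
    unfolding mono_ip_def using True by (simp add: cinner_cnj_commute[of "xs ! j" for j])
  also have "\<dots> = (\<Sum>p\<in>?P. \<Prod>j<?n. cinner (ys ! j) (xs ! inv p j))"
    by (rule sum.cong[OF refl])
      (use prod.permutes_inv[of _ "{..<?n}" "\<lambda>a j. cinner (ys ! a) (xs ! j)"] in auto)
  also have "\<dots> = (\<Sum>p\<in>?P. \<Prod>j<?n. cinner (ys ! j) (xs ! p j))"
    using sum_permutations_inverse[of "\<lambda>p. \<Prod>j<?n. cinner (ys ! j) (xs ! p j)" "{..<?n}"] by simp
  also have "\<dots> = mono_ip ys xs"
    unfolding mono_ip_def using True by simp
  finally show ?thesis by simp
qed

lemma mono_ip_mset_right: "mset ys = mset ys' \<Longrightarrow> mono_ip xs ys = mono_ip xs ys'"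
  using mono_ip_commute[of xs ys] mono_ip_commute[of xs ys'] mono_ip_mset_left[of ys ys' xs] by simp

text \<open>Expansion along the last factor: the permutations of \<open>{..<Suc n}\<close> are split according
  to the image \<open>b\<close> of \<open>n\<close>, and the remaining factors of \<open>ys\<close> are those of \<open>ys\<close> with \<open>ys ! b\<close>
  overwritten by \<open>ys ! n\<close>.\<close>

lemma mono_ip_snoc:
  assumes len: "length ys = Suc (length xs)"
  shows "mono_ip (xs @ [x]) ys =
    (\<Sum>b<Suc (length xs). cinner x (ys ! b) * mono_ip xs (take (length xs) (ys[b := ys ! length xs])))"
proof -
  define n where "n = length xs"
  have U: "{..<Suc n} = insert n {..<n}" by auto
  define f where "f p = (\<Prod>j<Suc n. cinner ((xs @ [x]) ! j) (ys ! p j))" for p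
  have "mono_ip (xs @ [x]) ys = sum f {p. p permutes {..<Suc n}}"
    unfolding mono_ip_def f_def n_def using len by simp
  also have "\<dots> = (\<Sum>b\<in>insert n {..<n}. \<Sum>q\<in>{p. p permutes {..<n}}. f (Transposition.transpose n b \<circ> q))"
    unfolding U by (rule sum_over_permutations_insert) auto
  also have "\<dots> = (\<Sum>b<Suc n. cinner x (ys ! b) * mono_ip xs (take n (ys[b := ys ! n])))"
    unfolding U[symmetric]
  proof (rule sum.cong[OF refl])
    fix b assume b: "b \<in> {..<Suc n}"
    define ys' where "ys' = take n (ys[b := ys ! n])"
    have "ys ! Transposition.transpose n b k = ys' ! k" if "k < n" for k
      using that b len unfolding ys'_def n_def
      by (cases "k = b") (auto simp: transpose_def nth_list_update)
    then have "f (Transposition.transpose n b \<circ> q) = cinner x (ys ! b) * (\<Prod>j<n. cinner (xs ! j) (ys' ! q j))"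
      if q: "q permutes {..<n}" for q
      using permutes_not_in[OF q, of n] permutes_in_image[OF q]
      by (auto simp: f_def n_def nth_append mult.commute intro!: prod.cong)
    then have "(\<Sum>q\<in>{p. p permutes {..<n}}. f (Transposition.transpose n b \<circ> q)) =
        (\<Sum>q\<in>{p. p permutes {..<n}}. cinner x (ys ! b) * (\<Prod>j<n. cinner (xs ! j) (ys' ! q j)))"
      by (intro sum.cong) auto
    also have "\<dots> = cinner x (ys ! b) * mono_ip xs ys'"
      unfolding mono_ip_def using len by (simp add: ys'_def n_def sum_distrib_left)
    finally show "(\<Sum>q\<in>{p. p permutes {..<n}}. f (Transposition.transpose n b \<circ> q)) =
        cinner x (ys ! b) * mono_ip xs (take n (ys[b := ys ! n]))"
      by (simp add: ys'_def)
  qed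
  finally show ?thesis by (simp add: n_def)
qed

lemma mset_take_list_update_last:
  assumes len: "length ys = Suc n" and b: "b < Suc n"
  shows "mset (take n (ys[b := ys ! n])) = mset (remove_nth b ys)"
proof (cases "b = n")
  case True
  then show ?thesis using len by (simp add: remove_nth_def)
next
  case False
  then have bn: "b < n" using b by simp
  have ys: "ys = take n ys @ [ys ! n]"
    using len take_Suc_conv_app_nth[of n ys] by simp
  have "mset (take n (ys[b := ys ! n])) = add_mset (ys ! n) (mset (take n ys) - {#ys ! b#})"
    using bn len by (simp add: take_update_swap mset_update)
  also have "\<dots> = mset ys - {#ys ! b#}"
  proof -
    have "ys ! b \<in># mset (take n ys)"
      using bn len by (simp add: in_set_conv_nth) (metis nth_take length_take min_absorb2 le_SucI order_refl len)
    moreover have "mset ys = add_mset (ys ! n) (mset (take n ys))"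
      by (subst ys) simp
    ultimately show ?thesis by simp
  qed
  also have "\<dots> = mset (remove_nth b ys)"
    using b len by (simp add: mset_remove_nth)
  finally show ?thesis .
qed

lemma mono_ip_Cons:
  "mono_ip (x # xs) ys = (\<Sum>j<length ys. cinner x (ys ! j) * mono_ip xs (remove_nth j ys))"
proof (cases "length ys = Suc (length xs)")
  case True
  have "mono_ip (x # xs) ys = mono_ip (xs @ [x]) ys"
    by (rule mono_ip_mset_left) simp
  also have "\<dots> = (\<Sum>j<length ys. cinner x (ys ! j) * mono_ip xs (remove_nth j ys))"
    unfolding mono_ip_snoc[OF True] True
    by (intro sum.cong refl arg_cong[where f="\<lambda>t. _ * t"] mono_ip_mset_right
        mset_take_list_update_last[OF True]) simp
  finally show ?thesis .
next
  case False
  then show ?thesis by (simp add: mono_ip_length_neq)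
qed

lemma mono_ip_Cons_right:
  "mono_ip xs (y # ys) = (\<Sum>i<length xs. cinner (xs ! i) y * mono_ip (remove_nth i xs) ys)"
  by (subst mono_ip_commute) (simp add: mono_ip_Cons mono_ip_commute[of ys] cinner_cnj_commute[of "xs ! i" y for i])

lemma mono_ip_Cons_antilinear:
  "mono_ip ((a *\<^sub>C x + b *\<^sub>C y) # ws) ys = cnj a * mono_ip (x # ws) ys + cnj b * mono_ip (y # ws) ys"
  unfolding mono_ip_Cons
  by (simp add: cinner_add_left cinner_scaleC_left algebra_simps sum.distrib sum_distrib_left)

lemma mono_ip_Cons_right_sum:
  "mono_ip xs ((\<Sum>k\<in>A. a k *\<^sub>C f k) # zs) = (\<Sum>k\<in>A. a k * mono_ip xs (f k # zs))"
  unfolding mono_ip_Cons_right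
  by (simp add: cinner_sum_scaleC_right sum_distrib_left sum_distrib_right mult.assoc sum.swap[of _ A])

lemma mono_ip_replicate:
  assumes "cinner e e = 1"
  shows "mono_ip (replicate n e) (replicate n e) = fact n"
proof -
  have "(\<Prod>j<n. cinner e (replicate n e ! p j)) = 1" if "p permutes {..<n}" for p
    using assms permutes_in_image[OF that] by (intro prod.neutral) auto
  then have "mono_ip (replicate n e) (replicate n e) = of_nat (card {p. p permutes {..<n}})"
    unfolding mono_ip_def by simp
  then show ?thesis by (simp add: card_permutations)
qed

section \<open>Creation and annihilation on the symmetric algebra\<close>

lemma sum_list_map_concat:
  "sum_list (map f (concat xss)) = sum_list (map (\<lambda>xs. sum_list (map f xs)) xss)"
  by (induction xss) auto

lemma sum_list_map_sum:
  "sum_list (map (\<lambda>x. \<Sum>k\<in>A. g x k) xs) = (\<Sum>k\<in>A. sum_list (map (\<lambda>x. g x k) xs))"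
  by (induction xs) (auto simp: sum.distrib)

lemma sum_list_map_upt_0: "sum_list (map f [0..<n]) = (\<Sum>j<n. f j)"
  by (simp add: interv_sum_list_conv_sum_set_nat atLeast0LessThan)

lemma cnj_sum_list: "cnj (sum_list (map f xs)) = sum_list (map (\<lambda>x. cnj (f x)) xs)"
  by (induction xs) auto

definition sv_creator :: "'v \<Rightarrow> 'v sv \<Rightarrow> 'v sv" where
  "sv_creator v \<psi> = map (\<lambda>(c, xs). (c, v # xs)) \<psi>"

definition sv_annihilator :: "'v::complex_inner_space \<Rightarrow> 'v sv \<Rightarrow> 'v sv" where
  "sv_annihilator v \<psi> =
     concat (map (\<lambda>(c, xs). map (\<lambda>j. (c * cinner v (xs ! j), remove_nth j xs)) [0..<length xs]) \<psi>)"

definition sv_scale :: "complex \<Rightarrow> 'v sv \<Rightarrow> 'v sv" where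
  "sv_scale t \<psi> = map (\<lambda>(c, xs). (t * c, xs)) \<psi>"

lemma sv_ip_Nil_left [simp]: "sv_ip [] \<psi> = 0"
  by (simp add: sv_ip_def)

lemma sv_ip_append_left: "sv_ip (\<phi> @ \<phi>') \<psi> = sv_ip \<phi> \<psi> + sv_ip \<phi>' \<psi>"
  by (simp add: sv_ip_def)

lemma sv_ip_append_right: "sv_ip \<phi> (\<psi> @ \<psi>') = sv_ip \<phi> \<psi> + sv_ip \<phi> \<psi>'"
  by (simp add: sv_ip_def case_prod_unfold sum_list_addf)

lemma sv_ip_commute: "sv_ip \<psi> \<phi> = cnj (sv_ip \<phi> \<psi>)"
proof -
  have "(\<lambda>(d, ys). cnj c * d * mono_ip xs ys) = (\<lambda>(d, ys). cnj (cnj d * c * mono_ip ys xs))"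
    for c and xs :: "'a list"
    by (auto simp: mono_ip_commute[of _ xs])
  then have "sv_ip \<psi> \<phi> = (\<Sum>(c, xs)\<leftarrow>\<psi>. \<Sum>(d, ys)\<leftarrow>\<phi>. cnj (cnj d * c * mono_ip ys xs))"
    unfolding sv_ip_def by (simp only:)
  also have "\<dots> = (\<Sum>(d, ys)\<leftarrow>\<phi>. \<Sum>(c, xs)\<leftarrow>\<psi>. cnj (cnj d * c * mono_ip ys xs))"
    by (induction \<psi>) (simp_all add: case_prod_unfold sum_list_addf)
  also have "\<dots> = cnj (sv_ip \<phi> \<psi>)"
    unfolding sv_ip_def by (simp add: cnj_sum_list case_prod_unfold o_def)
  finally show ?thesis .
qed

lemma sv_ip_self_eq_Re: "sv_ip \<psi> \<psi> = complex_of_real (Re (sv_ip \<psi> \<psi>))"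
proof -
  have "Im (sv_ip \<psi> \<psi>) = 0"
    using sv_ip_commute[of \<psi> \<psi>] by (metis cnj.sel(2) neg_equal_zero)
  then show ?thesis by (simp add: complex_eq_iff)
qed

lemma sv_ip_scale_left: "sv_ip (sv_scale t \<phi>) \<psi> = cnj t * sv_ip \<phi> \<psi>"
  unfolding sv_ip_def sv_scale_def by (simp add: o_def case_prod_unfold sum_list_const_mult mult.assoc)

lemma sv_ip_scale_right: "sv_ip \<phi> (sv_scale t \<psi>) = t * sv_ip \<phi> \<psi>"
  by (metis sv_ip_commute sv_ip_scale_left complex_cnj_cnj complex_cnj_mult)

lemma sv_ip_annihilator_right:
  "sv_ip \<phi> (sv_annihilator v \<psi>) = (\<Sum>(c, xs)\<leftarrow>\<phi>. \<Sum>(d, ys)\<leftarrow>\<psi>.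
     cnj c * d * (\<Sum>j<length ys. cinner v (ys ! j) * mono_ip xs (remove_nth j ys)))"
  unfolding sv_ip_def sv_annihilator_def
  by (simp add: sum_list_map_concat o_def case_prod_unfold sum_list_map_upt_0 sum_distrib_left
      mult.assoc)

lemma sv_ip_creator_annihilator_right:
  "sv_ip \<phi> (sv_creator w (sv_annihilator v \<psi>)) = (\<Sum>(c, xs)\<leftarrow>\<phi>. \<Sum>(d, ys)\<leftarrow>\<psi>.
     cnj c * d * (\<Sum>j<length ys. cinner v (ys ! j) * mono_ip xs (w # remove_nth j ys)))"
  unfolding sv_ip_def sv_annihilator_def sv_creator_def
  by (simp add: sum_list_map_concat o_def case_prod_unfold sum_list_map_upt_0 sum_distrib_left
      mult.assoc)

lemma sv_ip_creator_left: "sv_ip (sv_creator v \<phi>) \<psi> = sv_ip \<phi> (sv_annihilator v \<psi>)"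
  unfolding sv_ip_annihilator_right
  by (simp add: sv_ip_def sv_creator_def o_def case_prod_unfold mono_ip_Cons)

lemma sv_ip_annihilator_left: "sv_ip (sv_annihilator v \<phi>) \<psi> = sv_ip \<phi> (sv_creator v \<psi>)"
  by (metis sv_ip_commute sv_ip_creator_left)

text \<open>The canonical commutation relation \<open>a(v) c(v) = \<langle>v|v\<rangle> + c(v) a(v)\<close>, tested against \<open>\<phi>\<close>.\<close>

lemma sv_ip_annihilator_creator_right:
  "sv_ip \<phi> (sv_annihilator v (sv_creator v \<psi>)) =
     cinner v v * sv_ip \<phi> \<psi> + sv_ip \<phi> (sv_creator v (sv_annihilator v \<psi>))"
proof -
  have "sv_ip \<phi> (sv_annihilator v (sv_creator v \<psi>)) = (\<Sum>(c, xs)\<leftarrow>\<phi>. \<Sum>(d, ys)\<leftarrow>\<psi>.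
      cnj c * d * (cinner v v * mono_ip xs ys) +
      cnj c * d * (\<Sum>j<length ys. cinner v (ys ! j) * mono_ip xs (v # remove_nth j ys)))"
    unfolding sv_ip_annihilator_right sv_creator_def
    by (simp add: o_def case_prod_unfold sum.lessThan_Suc_shift distrib_left del: sum.lessThan_Suc)
  also have "\<dots> = (\<Sum>(c, xs)\<leftarrow>\<phi>. cinner v v * (\<Sum>(d, ys)\<leftarrow>\<psi>. cnj c * d * mono_ip xs ys)) +
      sv_ip \<phi> (sv_creator v (sv_annihilator v \<psi>))"
    unfolding sv_ip_creator_annihilator_right
    by (simp add: case_prod_unfold sum_list_addf sum_list_const_mult[symmetric] algebra_simps)
  also have "\<dots> = cinner v v * sv_ip \<phi> \<psi> + sv_ip \<phi> (sv_creator v (sv_annihilator v \<psi>))"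
    unfolding sv_ip_def by (simp add: sum_list_const_mult case_prod_unfold)
  finally show ?thesis .
qed

lemma sv_ip_creator_self:
  "sv_ip (sv_creator v \<psi>) (sv_creator v \<psi>) =
     sv_ip (sv_annihilator v \<psi>) (sv_annihilator v \<psi>) + cinner v v * sv_ip \<psi> \<psi>"
  by (simp add: sv_ip_creator_left sv_ip_annihilator_creator_right sv_ip_annihilator_left)

lemma sv_annihilator_scaleC: "sv_annihilator (t *\<^sub>C e) \<psi> = sv_scale (cnj t) (sv_annihilator e \<psi>)"
  unfolding sv_annihilator_def sv_scale_def
  by (simp add: map_concat o_def case_prod_unfold cinner_scaleC_left mult.commute mult.left_commute)

lemma sv_eval_scale: "sv_eval F (sv_scale t \<psi>) = cnj t * sv_eval F \<psi>"
  unfolding sv_eval_def sv_scale_def by (simp add: o_def case_prod_unfold sum_list_const_mult mult.assoc)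

lemma sv_eval_creator: "sv_eval F (sv_creator v \<psi>) = sv_eval (annihilator v F) \<psi>"
  unfolding sv_eval_def sv_creator_def annihilator_def by (simp add: o_def case_prod_unfold)

lemma sv_eval_annihilator: "sv_eval F (sv_annihilator v \<psi>) = sv_eval (creator v F) \<psi>"
  unfolding sv_eval_def sv_annihilator_def creator_def
  by (simp add: sum_list_map_concat o_def case_prod_unfold sum_list_map_upt_0 sum_distrib_left
      mult.assoc remove_nth_def cnj_cinner)

definition orthonormal_list :: "'v::complex_inner_space list \<Rightarrow> bool" where
  "orthonormal_list es \<longleftrightarrow>
     (\<forall>i<length es. \<forall>j<length es. cinner (es ! i) (es ! j) = (if i = j then 1 else 0))"

definition orth_proj :: "'v::complex_inner_space list \<Rightarrow> 'v \<Rightarrow> 'v" where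
  "orth_proj es x = (\<Sum>k<length es. cinner (es ! k) x *\<^sub>C es ! k)"

lemma orthonormal_list_Nil [simp]: "orthonormal_list []"
  by (simp add: orthonormal_list_def)

lemma orthonormal_list_appendD: "orthonormal_list (es @ r) \<Longrightarrow> orthonormal_list es"
  unfolding orthonormal_list_def
proof (intro allI impI)
  fix i j
  assume "\<forall>i<length (es @ r). \<forall>j<length (es @ r).
      cinner ((es @ r) ! i) ((es @ r) ! j) = (if i = j then 1 else 0)"
    and "i < length es" "j < length es"
  then have "cinner ((es @ r) ! i) ((es @ r) ! j) = (if i = j then 1 else 0)"
    by simp
  then show "cinner (es ! i) (es ! j) = (if i = j then 1 else 0)"
    using \<open>i < length es\<close> \<open>j < length es\<close> by (simp add: nth_append)
qed

lemma orthonormal_list_snoc: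
  assumes "orthonormal_list es" "cinner e e = 1" "\<And>i. i < length es \<Longrightarrow> cinner (es ! i) e = 0"
  shows "orthonormal_list (es @ [e])"
proof -
  have "cinner e (es ! i) = 0" if "i < length es" for i
    using assms(3)[OF that] cinner_cnj_commute[of e "es ! i"] by simp
  then show ?thesis
    using assms unfolding orthonormal_list_def
    by (auto simp: nth_append less_Suc_eq)
qed

lemma cinner_orth_proj:
  assumes "orthonormal_list es" "i < length es"
  shows "cinner (es ! i) (orth_proj es x) = cinner (es ! i) x"
proof -
  have "cinner (es ! i) (orth_proj es x) = (\<Sum>k<length es. cinner (es ! k) x * cinner (es ! i) (es ! k))"
    unfolding orth_proj_def by (rule cinner_sum_scaleC_right)
  also have "\<dots> = (\<Sum>k<length es. if k = i then cinner (es ! k) x else 0)"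
    using assms unfolding orthonormal_list_def by (intro sum.cong) auto
  finally have "cinner (es ! i) (orth_proj es x) = \<dots>" .
  then show ?thesis using assms(2) by simp
qed

lemma orth_proj_snoc: "orth_proj (es @ [e]) x = orth_proj es x + cinner e x *\<^sub>C e"
proof -
  have "(\<Sum>k<length es. cinner ((es @ [e]) ! k) x *\<^sub>C (es @ [e]) ! k) = orth_proj es x"
    unfolding orth_proj_def by (intro sum.cong) (auto simp: nth_append)
  then show ?thesis unfolding orth_proj_def by simp
qed

lemma orth_proj_append: "orth_proj (es @ r) x = orth_proj es x + orth_proj r x"
proof (induction r rule: rev_induct)
  case Nil
  then show ?case by (simp add: orth_proj_def)
next
  case (snoc e r)
  then show ?case
    using orth_proj_snoc[of "es @ r"] orth_proj_snoc[of r] by (simp add: add.assoc)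
qed

lemma orth_proj_append_fixed:
  assumes "orthonormal_list (es @ r)" "orth_proj es x = x"
  shows "orth_proj (es @ r) x = x"
proof -
  have "cinner (r ! k) x = 0" if k: "k < length r" for k
  proof -
    have "cinner (r ! k) (es ! j) = 0" if "j < length es" for j
    proof -
      have "length es + k < length (es @ r)" "j < length (es @ r)" "length es + k \<noteq> j"
        using k that by auto
      then have "cinner ((es @ r) ! (length es + k)) ((es @ r) ! j) = 0"
        using assms(1) unfolding orthonormal_list_def by presburger
      then show ?thesis using that by (simp add: nth_append)
    qed
    then have "cinner (r ! k) (orth_proj es x) = 0"
      unfolding orth_proj_def by (simp add: cinner_sum_scaleC_right)
    then show ?thesis using assms(2) by simp
  qed
  then have "orth_proj r x = 0"
    unfolding orth_proj_def by simp
  then show ?thesis using assms(2) by (simp add: orth_proj_append)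
qed

text \<open>One Gram--Schmidt step: if \<open>w\<close> is not yet fixed, append the normalization of
  \<open>w - orth_proj es w\<close>.\<close>

lemma orthonormal_list_extend_fixed:
  assumes "orthonormal_list es"
  obtains r where "orthonormal_list (es @ r)" "orth_proj (es @ r) w = w" "length r \<le> 1"
proof (cases "orth_proj es w = w")
  case True
  then show ?thesis using assms that[of "[]"] by simp
next
  case False
  define y where "y = w - orth_proj es w"
  then have y0: "y \<noteq> 0" using False by simp
  define e where "e = complex_of_real (1 / cnorm y) *\<^sub>C y"
  have ey: "cinner (es ! i) y = 0" if "i < length es" for i
    using cinner_orth_proj[OF assms that, of w] by (simp add: y_def cinner_diff_right)
  have orth: "orthonormal_list (es @ [e])"
    using assms cinner_normalize_self[OF y0] ey by (intro orthonormal_list_snoc) (simp_all add: e_def cinner_scaleC_right)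
  have "cinner y (es ! i) = 0" if "i < length es" for i
    using ey[OF that] cinner_cnj_commute[of y "es ! i"] by simp
  then have "cinner e (orth_proj es w) = 0"
    unfolding orth_proj_def by (simp add: cinner_sum_scaleC_right e_def cinner_scaleC_left)
  then have "cinner e w = cinner e y"
    by (simp add: y_def cinner_diff_right)
  also have "\<dots> = complex_of_real (cnorm y)"
    using cnorm_pos[OF y0] by (simp add: e_def cinner_scaleC_left cinner_self_eq_cnorm power2_eq_square)
  finally have "cinner e w *\<^sub>C e = y"
    using cnorm_pos[OF y0] by (simp add: e_def scaleC_scaleC scaleC_one)
  then have "orth_proj (es @ [e]) w = w"
    by (simp add: orth_proj_snoc y_def)
  then show ?thesis using orth that[of "[e]"] by simp
qed

lemma orthonormal_list_extend_fixed_all: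
  assumes "orthonormal_list es"
  obtains r where "orthonormal_list (es @ r)" "\<forall>w\<in>set ws. orth_proj (es @ r) w = w"
  using assms
proof (induction ws arbitrary: es thesis)
  case Nil
  then show ?case using Nil.prems(1)[of "[]"] by simp
next
  case (Cons w ws)
  obtain r1 where r1: "orthonormal_list (es @ r1)" "orth_proj (es @ r1) w = w"
    using orthonormal_list_extend_fixed[OF Cons.prems(2)] by blast
  obtain r2 where r2: "orthonormal_list (es @ r1 @ r2)" "\<forall>w\<in>set ws. orth_proj (es @ r1 @ r2) w = w"
    using Cons.IH[OF _ r1(1)] by auto
  have "orth_proj (es @ r1 @ r2) w = w"
    using orth_proj_append_fixed[of "es @ r1" r2 w] r1 r2 by simp
  then show ?case using r2 Cons.prems(1)[of "r1 @ r2"] by auto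
qed

section \<open>Homogeneous elements and the number operator\<close>

definition sv_homogeneous :: "nat \<Rightarrow> 'v sv \<Rightarrow> bool" where
  "sv_homogeneous n \<psi> \<longleftrightarrow> (\<forall>(c, xs)\<in>set \<psi>. length xs = n)"

definition sv_factors :: "'v sv \<Rightarrow> 'v list" where
  "sv_factors \<psi> = concat (map snd \<psi>)"

lemma sv_homogeneous_creator: "sv_homogeneous n \<psi> \<Longrightarrow> sv_homogeneous (Suc n) (sv_creator v \<psi>)"
  unfolding sv_homogeneous_def sv_creator_def by auto

lemma sv_homogeneous_annihilator:
  "sv_homogeneous (Suc n) \<psi> \<Longrightarrow> sv_homogeneous n (sv_annihilator v \<psi>)"
  unfolding sv_homogeneous_def sv_annihilator_def by auto

lemma sv_annihilator_homogeneous_0: "sv_homogeneous 0 \<psi> \<Longrightarrow> sv_annihilator v \<psi> = []"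
  unfolding sv_homogeneous_def sv_annihilator_def by auto

lemma sv_homogeneous_scale: "sv_homogeneous n \<psi> \<Longrightarrow> sv_homogeneous n (sv_scale t \<psi>)"
  unfolding sv_homogeneous_def sv_scale_def by auto

lemma mono_ip_number_operator:
  assumes "orthonormal_list es" "\<And>j. j < length ys \<Longrightarrow> orth_proj es (ys ! j) = ys ! j"
  shows "(\<Sum>k<length es. \<Sum>j<length ys. cinner (es ! k) (ys ! j) * mono_ip xs (es ! k # remove_nth j ys))
         = of_nat (length ys) * mono_ip xs ys"
proof -
  have "(\<Sum>k<length es. \<Sum>j<length ys. cinner (es ! k) (ys ! j) * mono_ip xs (es ! k # remove_nth j ys))
      = (\<Sum>j<length ys. mono_ip xs (orth_proj es (ys ! j) # remove_nth j ys))"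
    unfolding orth_proj_def by (simp add: mono_ip_Cons_right_sum sum.swap[of _ "{..<length es}"])
  also have "\<dots> = (\<Sum>j<length ys. mono_ip xs ys)"
  proof (rule sum.cong[OF refl])
    fix j assume "j \<in> {..<length ys}"
    then have "mono_ip xs (ys ! j # remove_nth j ys) = mono_ip xs ys"
      by (intro mono_ip_mset_right) (simp add: mset_remove_nth)
    then show "mono_ip xs (orth_proj es (ys ! j) # remove_nth j ys) = mono_ip xs ys"
      using assms(2) \<open>j \<in> {..<length ys}\<close> by simp
  qed
  finally show ?thesis by simp
qed

lemma sv_ip_number_operator:
  assumes "orthonormal_list es" "sv_homogeneous n \<psi>"
    and "\<And>w. w \<in> set (sv_factors \<psi>) \<Longrightarrow> orth_proj es w = w"
  shows "(\<Sum>k<length es. sv_ip \<phi> (sv_creator (es ! k) (sv_annihilator (es ! k) \<psi>))) = of_nat n * sv_ip \<phi> \<psi>"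
proof -
  have "(\<Sum>k<length es. \<Sum>j<length (snd p). cinner (es ! k) (snd p ! j) *
      mono_ip xs (es ! k # remove_nth j (snd p))) = of_nat n * mono_ip xs (snd p)"
    if "p \<in> set \<psi>" for p xs
  proof -
    have "length (snd p) = n" using that assms(2) by (auto simp: sv_homogeneous_def)
    moreover have "snd p ! j \<in> set (sv_factors \<psi>)" if "j < length (snd p)" for j
      using \<open>p \<in> set \<psi>\<close> that unfolding sv_factors_def by force
    ultimately show ?thesis using mono_ip_number_operator[OF assms(1), of "snd p" xs] assms(3) by simp
  qed
  then have "(\<Sum>k<length es. sv_ip \<phi> (sv_creator (es ! k) (sv_annihilator (es ! k) \<psi>))) =
      (\<Sum>(c, xs)\<leftarrow>\<phi>. \<Sum>(d, ys)\<leftarrow>\<psi>. cnj c * d * (of_nat n * mono_ip xs ys))"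
    unfolding sv_ip_creator_annihilator_right
    by (simp add: sum_list_map_sum[symmetric] case_prod_unfold sum_distrib_left[symmetric]
        cong: map_cong)
  also have "\<dots> = of_nat n * sv_ip \<phi> \<psi>"
    unfolding sv_ip_def
    by (simp add: case_prod_unfold sum_list_const_mult mult.commute mult.left_commute)
  finally show ?thesis .
qed

lemma sv_number_identity:
  assumes "orthonormal_list es" "sv_homogeneous n \<psi>"
    and "\<And>w. w \<in> set (sv_factors \<psi>) \<Longrightarrow> orth_proj es w = w"
  shows "real n * Re (sv_ip \<psi> \<psi>) =
    (\<Sum>k<length es. Re (sv_ip (sv_annihilator (es ! k) \<psi>) (sv_annihilator (es ! k) \<psi>)))"
  using arg_cong[OF sv_ip_number_operator[OF assms, of \<psi>], of Re]
  by (simp add: sv_ip_annihilator_left)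

lemma sv_ip_self_nonneg_homogeneous: "sv_homogeneous n \<psi> \<Longrightarrow> 0 \<le> Re (sv_ip \<psi> \<psi>)"
proof (induction n arbitrary: \<psi>)
  case 0
  then have "snd p = []" if "p \<in> set \<psi>" for p
    using that by (auto simp: sv_homogeneous_def)
  then have "sv_ip \<psi> \<psi> = (\<Sum>(c, xs)\<leftarrow>\<psi>. \<Sum>(d, ys)\<leftarrow>\<psi>. cnj c * d)"
    unfolding sv_ip_def by (simp add: case_prod_unfold cong: map_cong)
  also have "\<dots> = cnj (sum_list (map fst \<psi>)) * sum_list (map fst \<psi>)"
    by (simp add: case_prod_unfold sum_list_const_mult sum_list_mult_const cnj_sum_list o_def)
  finally show ?case by simp
next
  case (Suc n)
  obtain es where "orthonormal_list es" "\<forall>w\<in>set (sv_factors \<psi>). orth_proj es w = w"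
    using orthonormal_list_extend_fixed_all[of "[]"] by auto
  then have "real (Suc n) * Re (sv_ip \<psi> \<psi>) =
      (\<Sum>k<length es. Re (sv_ip (sv_annihilator (es ! k) \<psi>) (sv_annihilator (es ! k) \<psi>)))"
    using sv_number_identity Suc.prems by blast
  also have "\<dots> \<ge> 0"
    by (intro sum_nonneg Suc.IH sv_homogeneous_annihilator Suc.prems)
  finally show ?case by (simp add: zero_le_mult_iff)
qed

lemma sv_annihilator_ip_le_of_unit:
  assumes "cinner e e = 1" "sv_homogeneous n \<psi>"
  shows "Re (sv_ip (sv_annihilator e \<psi>) (sv_annihilator e \<psi>)) \<le> real n * Re (sv_ip \<psi> \<psi>)"
proof (cases n)
  case 0
  then show ?thesis
    using assms(2) sv_ip_self_nonneg_homogeneous[OF assms(2)] sv_annihilator_homogeneous_0[of \<psi> e]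
    by simp
next
  case (Suc m)
  have "orthonormal_list [e]"
    using assms(1) by (simp add: orthonormal_list_def)
  then obtain r where r: "orthonormal_list (e # r)" "\<forall>w\<in>set (sv_factors \<psi>). orth_proj (e # r) w = w"
    using orthonormal_list_extend_fixed_all[of "[e]"] by auto
  have "Re (sv_ip (sv_annihilator e \<psi>) (sv_annihilator e \<psi>)) =
      (\<Sum>k\<in>{0}. Re (sv_ip (sv_annihilator ((e # r) ! k) \<psi>) (sv_annihilator ((e # r) ! k) \<psi>)))"
    by simp
  also have "\<dots> \<le> (\<Sum>k<length (e # r). Re (sv_ip (sv_annihilator ((e # r) ! k) \<psi>)
      (sv_annihilator ((e # r) ! k) \<psi>)))"
    using sv_ip_self_nonneg_homogeneous[OF sv_homogeneous_annihilator] assms(2) Suc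
    by (intro sum_mono2) auto
  also have "\<dots> = real n * Re (sv_ip \<psi> \<psi>)"
    using sv_number_identity[OF r(1) assms(2)] r(2) by simp
  finally show ?thesis .
qed

lemma sv_annihilator_ip_le:
  assumes "sv_homogeneous n \<psi>"
  shows "Re (sv_ip (sv_annihilator v \<psi>) (sv_annihilator v \<psi>)) \<le> real n * (cnorm v)\<^sup>2 * Re (sv_ip \<psi> \<psi>)"
proof (cases "v = 0")
  case True
  then show ?thesis
    using cnorm_eq_zero_iff[of v] by (simp add: sv_ip_annihilator_right case_prod_unfold)
next
  case False
  define e where "e = complex_of_real (1 / cnorm v) *\<^sub>C v"
  have "v = complex_of_real (cnorm v) *\<^sub>C e"
    using cnorm_pos[OF False] by (simp add: e_def scaleC_scaleC scaleC_one)
  then have "sv_annihilator v \<psi> = sv_scale (complex_of_real (cnorm v)) (sv_annihilator e \<psi>)"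
    using sv_annihilator_scaleC[of "complex_of_real (cnorm v)" e \<psi>] by simp
  then have "sv_ip (sv_annihilator v \<psi>) (sv_annihilator v \<psi>) =
      complex_of_real ((cnorm v)\<^sup>2) * sv_ip (sv_annihilator e \<psi>) (sv_annihilator e \<psi>)"
    by (simp add: sv_ip_scale_left sv_ip_scale_right power2_eq_square)
  moreover have "(cnorm v)\<^sup>2 * Re (sv_ip (sv_annihilator e \<psi>) (sv_annihilator e \<psi>)) \<le>
      (cnorm v)\<^sup>2 * (real n * Re (sv_ip \<psi> \<psi>))"
    using sv_annihilator_ip_le_of_unit[OF cinner_normalize_self[OF False] assms]
    by (intro mult_left_mono) (simp_all add: e_def)
  ultimately show ?thesis
    by (simp add: mult.commute mult.left_commute)
qed

lemma sv_creator_ip_le: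
  assumes "sv_homogeneous n \<psi>"
  shows "Re (sv_ip (sv_creator v \<psi>) (sv_creator v \<psi>)) \<le> real (Suc n) * (cnorm v)\<^sup>2 * Re (sv_ip \<psi> \<psi>)"
  using sv_annihilator_ip_le[OF assms, of v]
  by (simp add: sv_ip_creator_self cinner_self_eq_cnorm algebra_simps)

definition sv_component :: "nat \<Rightarrow> 'v sv \<Rightarrow> 'v sv" where
  "sv_component n \<psi> = filter (\<lambda>(c, xs). length xs = n) \<psi>"

lemma sv_homogeneous_component: "sv_homogeneous n (sv_component n \<psi>)"
  unfolding sv_homogeneous_def sv_component_def by auto

lemma sv_degree_bounded:
  obtains N where "\<forall>(c, xs)\<in>set \<psi>. length xs < N"
proof -
  have "finite ((\<lambda>(c, xs). length xs) ` set \<psi>)" by simp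
  then obtain N where "\<forall>m\<in>(\<lambda>(c, xs). length xs) ` set \<psi>. m < N"
    using finite_nat_set_iff_bounded by blast
  then have "\<forall>(c, xs)\<in>set \<psi>. length xs < N" by auto
  then show ?thesis by (rule that)
qed

lemma sum_list_map_split_degree:
  assumes "\<forall>(c, xs)\<in>set \<psi>. length xs < N"
  shows "sum_list (map f \<psi>) = (\<Sum>n<N. sum_list (map f (filter (\<lambda>(c, xs). length xs = n) \<psi>)))"
proof -
  have "(\<Sum>n<N. sum_list (map f (filter (\<lambda>(c, xs). length xs = n) \<psi>))) =
      sum_list (map (\<lambda>p. \<Sum>n<N. if length (snd p) = n then f p else 0) \<psi>)"
    by (simp only: sum_list_map_filter' sum_list_map_sum case_prod_unfold)
  also have "\<dots> = sum_list (map f \<psi>)"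
    using assms by (intro arg_cong[where f=sum_list] map_cong) auto
  finally show ?thesis ..
qed

lemma sv_ip_split_degree:
  assumes "\<forall>(c, xs)\<in>set \<phi>. length xs < N"
  shows "sv_ip \<phi> \<psi> = (\<Sum>n<N. sv_ip (sv_component n \<phi>) (sv_component n \<psi>))"
proof -
  have "sv_ip (sv_component n \<phi>) \<psi> = sv_ip (sv_component n \<phi>) (sv_component n \<psi>)" for n
    unfolding sv_ip_def sv_component_def
    by (intro arg_cong[where f=sum_list] map_cong refl, clarsimp, rule sum_list_map_filter[symmetric])
      (auto simp: mono_ip_length_neq)
  moreover have "sv_ip \<phi> \<psi> = (\<Sum>n<N. sv_ip (sv_component n \<phi>) \<psi>)"
    unfolding sv_ip_def sv_component_def by (rule sum_list_map_split_degree[OF assms])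
  ultimately show ?thesis by simp
qed

lemma sv_eval_split_degree:
  assumes "\<forall>(c, xs)\<in>set \<psi>. length xs < N"
  shows "sv_eval F \<psi> = (\<Sum>n<N. sv_eval F (sv_component n \<psi>))"
  unfolding sv_eval_def sv_component_def by (rule sum_list_map_split_degree[OF assms])

lemma sv_ip_self_nonneg: "0 \<le> Re (sv_ip \<psi> \<psi>)"
proof -
  obtain N where N: "\<forall>(c, xs)\<in>set \<psi>. length xs < N"
    by (rule sv_degree_bounded)
  show ?thesis
    unfolding sv_ip_split_degree[OF N]
    by (simp add: sum_nonneg sv_ip_self_nonneg_homogeneous[OF sv_homogeneous_component])
qed

lemma sv_norm_nonneg: "0 \<le> sv_norm \<psi>"
  using sv_ip_self_nonneg[of \<psi>] by (simp add: sv_norm_def)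

lemma sv_norm_sq: "(sv_norm \<psi>)\<^sup>2 = Re (sv_ip \<psi> \<psi>)"
  using sv_ip_self_nonneg[of \<psi>] by (simp add: sv_norm_def)

lemma sv_norm_sq_split_degree:
  assumes "\<forall>(c, xs)\<in>set \<psi>. length xs < N"
  shows "(sv_norm \<psi>)\<^sup>2 = (\<Sum>n<N. (sv_norm (sv_component n \<psi>))\<^sup>2)"
  using sv_ip_split_degree[OF assms, of \<psi>] by (simp add: sv_norm_sq)

lemma sv_norm_scale: "sv_norm (sv_scale t \<psi>) = cmod t * sv_norm \<psi>"
proof -
  have "sv_ip (sv_scale t \<psi>) (sv_scale t \<psi>) = (cnj t * t) * sv_ip \<psi> \<psi>"
    by (simp add: sv_ip_scale_left sv_ip_scale_right)
  also have "cnj t * t = complex_of_real ((cmod t)\<^sup>2)"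
    using complex_norm_square[of t] by (simp add: mult.commute)
  finally have "Re (sv_ip (sv_scale t \<psi>) (sv_scale t \<psi>)) = (cmod t)\<^sup>2 * Re (sv_ip \<psi> \<psi>)"
    by simp
  then have "sv_norm (sv_scale t \<psi>) = sqrt ((cmod t)\<^sup>2) * sqrt (Re (sv_ip \<psi> \<psi>))"
    unfolding sv_norm_def by (simp only: real_sqrt_mult)
  then show ?thesis by (simp add: sv_norm_def)
qed

lemma sv_norm_sq_le_imp_le:
  assumes "(sv_norm \<phi>)\<^sup>2 \<le> real k * (cnorm v)\<^sup>2 * (sv_norm \<psi>)\<^sup>2"
  shows "sv_norm \<phi> \<le> sqrt (real k) * cnorm v * sv_norm \<psi>"
proof (rule power2_le_imp_le)
  show "(sv_norm \<phi>)\<^sup>2 \<le> (sqrt (real k) * cnorm v * sv_norm \<psi>)\<^sup>2"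
    using assms by (simp add: power_mult_distrib)
  show "0 \<le> sqrt (real k) * cnorm v * sv_norm \<psi>"
    using cnorm_nonneg[of v] sv_norm_nonneg[of \<psi>] by simp
qed

lemma quadratic_nonneg_imp_discriminant_le:
  fixes A B C :: real
  assumes "0 \<le> B" "0 \<le> C" "\<And>r. 0 \<le> A - 2 * r * B + r\<^sup>2 * B * C"
  shows "B \<le> A * C"
proof (cases "C = 0")
  case True
  show ?thesis
  proof (rule ccontr)
    assume "\<not> B \<le> A * C"
    then have "0 < B" using True by simp
    then show False
      using assms(3)[of "(\<bar>A\<bar> + 1) / B"] True by simp
  qed
next
  case False
  then have "0 < C" using assms(2) by simp
  moreover have "0 \<le> A - 2 * (1 / C) * B + (1 / C)\<^sup>2 * B * C"
    by (rule assms(3))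
  ultimately show ?thesis by (simp add: power2_eq_square field_simps)
qed

lemma sv_ip_cauchy_schwarz: "cmod (sv_ip \<phi> \<psi>) \<le> sv_norm \<phi> * sv_norm \<psi>"
proof -
  define b where "b = sv_ip \<phi> \<psi>"
  define A where "A = Re (sv_ip \<psi> \<psi>)"
  define C where "C = Re (sv_ip \<phi> \<phi>)"
  have \<phi>\<phi>: "sv_ip \<phi> \<phi> = complex_of_real C"
    unfolding C_def by (rule sv_ip_self_eq_Re)
  have \<psi>\<psi>: "sv_ip \<psi> \<psi> = complex_of_real A"
    unfolding A_def by (rule sv_ip_self_eq_Re)
  have \<psi>\<phi>: "sv_ip \<psi> \<phi> = cnj b"
    unfolding b_def by (rule sv_ip_commute)
  have bb: "cnj b * b = complex_of_real ((cmod b)\<^sup>2)"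
    using complex_norm_square[of b] by (simp add: mult.commute)
  have "0 \<le> A - 2 * r * (cmod b)\<^sup>2 + r\<^sup>2 * (cmod b)\<^sup>2 * C" for r
  proof -
    define u where "u = - complex_of_real r * b"
    have "sv_ip (\<psi> @ sv_scale u \<phi>) (\<psi> @ sv_scale u \<phi>) =
        sv_ip \<psi> \<psi> + u * sv_ip \<psi> \<phi> + cnj u * sv_ip \<phi> \<psi> + cnj u * u * sv_ip \<phi> \<phi>"
      by (simp add: sv_ip_append_left sv_ip_append_right sv_ip_scale_left sv_ip_scale_right algebra_simps)
    also have "\<dots> = complex_of_real A - 2 * complex_of_real r * (cnj b * b)
        + complex_of_real r ^ 2 * (cnj b * b) * complex_of_real C"
      unfolding \<phi>\<phi> \<psi>\<psi> \<psi>\<phi> b_def[symmetric] u_def by (simp add: algebra_simps power2_eq_square)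
    finally show ?thesis
      using sv_ip_self_nonneg[of "\<psi> @ sv_scale u \<phi>"] unfolding bb by simp
  qed
  then have "(cmod b)\<^sup>2 \<le> A * C"
    by (intro quadratic_nonneg_imp_discriminant_le) (auto simp: C_def sv_ip_self_nonneg)
  then have "sqrt ((cmod b)\<^sup>2) \<le> sqrt (A * C)"
    by (rule real_sqrt_le_mono)
  then have "sqrt ((cmod b)\<^sup>2) \<le> sqrt A * sqrt C"
    by (simp add: real_sqrt_mult)
  then show ?thesis by (simp add: b_def A_def C_def sv_norm_def mult.commute)
qed

lemma sv_eval_bounded_of_components:
  assumes bound: "\<And>n \<psi>. sv_homogeneous n \<psi> \<Longrightarrow> cmod (sv_eval F \<psi>) \<le> b n * sv_norm \<psi>"
    and summable: "summable (\<lambda>n. (b n)\<^sup>2)"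
  shows "\<exists>C. \<forall>\<psi>. cmod (sv_eval F \<psi>) \<le> C * sv_norm \<psi>"
proof (intro exI allI)
  fix \<psi> :: "'a sv"
  obtain N where N: "\<forall>(c, xs)\<in>set \<psi>. length xs < N"
    by (rule sv_degree_bounded)
  have "cmod (sv_eval F \<psi>) \<le> (\<Sum>n<N. cmod (sv_eval F (sv_component n \<psi>)))"
    unfolding sv_eval_split_degree[OF N] by (rule norm_sum)
  also have "\<dots> \<le> (\<Sum>n<N. b n * sv_norm (sv_component n \<psi>))"
    by (intro sum_mono bound sv_homogeneous_component)
  also have "\<dots> \<le> sqrt (\<Sum>n<N. (b n)\<^sup>2) * sqrt (\<Sum>n<N. (sv_norm (sv_component n \<psi>))\<^sup>2)"
    using real_sqrt_le_mono[OF Cauchy_Schwarz_ineq_sum[of b "\<lambda>n. sv_norm (sv_component n \<psi>)"]]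
    by (simp add: real_sqrt_mult abs_le_iff)
  also have "\<dots> = sqrt (\<Sum>n<N. (b n)\<^sup>2) * sv_norm \<psi>"
    using sv_norm_sq_split_degree[OF N] sv_norm_nonneg[of \<psi>] by (metis real_sqrt_abs abs_of_nonneg)
  also have "\<dots> \<le> sqrt (\<Sum>n. (b n)\<^sup>2) * sv_norm \<psi>"
    using sv_norm_nonneg[of \<psi>] sum_le_suminf[OF summable, of "{..<N}"]
    by (intro mult_right_mono real_sqrt_le_mono) auto
  finally show "cmod (sv_eval F \<psi>) \<le> sqrt (\<Sum>n. (b n)\<^sup>2) * sv_norm \<psi>" .
qed

section \<open>Creators and annihilators on the Fock space\<close>

lemma fockI:
  assumes "sv_antidual F"
    and "\<And>n \<psi>. sv_homogeneous n \<psi> \<Longrightarrow> cmod (sv_eval F \<psi>) \<le> b n * sv_norm \<psi>"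
    and "summable (\<lambda>n. (b n)\<^sup>2)"
  shows "F \<in> fock"
  using assms sv_eval_bounded_of_components[of F b] by (simp add: fock_def)

lemma sv_antidual_mset_eq: "sv_antidual F \<Longrightarrow> mset xs = mset ys \<Longrightarrow> F xs = F ys"
  unfolding sv_antidual_def by blast

lemma sv_antidual_Cons:
  assumes "sv_antidual F"
  shows "F ((a *\<^sub>C x + b *\<^sub>C y) # ws) = cnj a * F (x # ws) + cnj b * F (y # ws)"
proof -
  have "F ([] @ (a *\<^sub>C x + b *\<^sub>C y) # ws) = cnj a * F ([] @ x # ws) + cnj b * F ([] @ y # ws)"
    using assms unfolding sv_antidual_def by blast
  then show ?thesis by simp
qed

text \<open>By symmetry, antilinearity in the first slot suffices.\<close>

lemma sv_antidualI:
  assumes "\<And>xs ys. mset xs = mset ys \<Longrightarrow> F xs = F ys"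
    and "\<And>ws a b x y. F ((a *\<^sub>C x + b *\<^sub>C y) # ws) = cnj a * F (x # ws) + cnj b * F (y # ws)"
  shows "sv_antidual F"
  unfolding sv_antidual_def
proof (intro conjI allI impI)
  show "mset xs = mset ys \<Longrightarrow> F xs = F ys" for xs ys
    by (rule assms(1))
  fix xs ys :: "'a list" and a b x y
  have swap: "F (xs @ z # ys) = F (z # xs @ ys)" for z
    by (rule assms(1)) simp
  show "F (xs @ (a *\<^sub>C x + b *\<^sub>C y) # ys) = cnj a * F (xs @ x # ys) + cnj b * F (xs @ y # ys)"
    unfolding swap by (rule assms(2))
qed

lemma sv_antidual_annihilator:
  assumes "sv_antidual F"
  shows "sv_antidual (annihilator v F)"
proof (rule sv_antidualI)
  show "annihilator v F xs = annihilator v F ys" if "mset xs = mset ys" for xs ys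
    using sv_antidual_mset_eq[OF assms, of "v # xs" "v # ys"] that by (simp add: annihilator_def)
  show "annihilator v F ((a *\<^sub>C x + b *\<^sub>C y) # ws) =
      cnj a * annihilator v F (x # ws) + cnj b * annihilator v F (y # ws)" for ws a b x y
  proof -
    have "F ([v] @ (a *\<^sub>C x + b *\<^sub>C y) # ws) = cnj a * F ([v] @ x # ws) + cnj b * F ([v] @ y # ws)"
      using assms unfolding sv_antidual_def by blast
    then show ?thesis by (simp add: annihilator_def)
  qed
qed

lemma creator_remove_nth: "creator v F xs = (\<Sum>j<length xs. cinner (xs ! j) v * F (remove_nth j xs))"
  by (simp add: creator_def remove_nth_def)

lemma creator_mset_eq:
  assumes F: "sv_antidual F" and m: "mset xs = mset ys"
  shows "creator v F xs = creator v F ys"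
proof -
  obtain s where s: "s permutes {..<length xs}" "permute_list s xs = ys"
    using mset_eq_permutation[of ys xs] m by metis
  have len: "length ys = length xs" using s(2) by auto
  have ys: "ys ! j = xs ! s j" if "j < length xs" for j
    using s that by (auto simp: permute_list_nth)
  have sj: "s j < length xs" if "j < length xs" for j
    using permutes_in_image[OF s(1)] that by simp
  define g where "g k = cinner (xs ! k) v * F (remove_nth k xs)" for k
  have "creator v F ys = (\<Sum>j<length xs. g (s j))"
    unfolding creator_remove_nth len
  proof (rule sum.cong[OF refl])
    fix j assume j: "j \<in> {..<length xs}"
    then have "mset (remove_nth j ys) = mset (remove_nth (s j) xs)"
      using sj[of j] ys[of j] len m by (simp add: mset_remove_nth)
    then have "F (remove_nth j ys) = F (remove_nth (s j) xs)"
      by (rule sv_antidual_mset_eq[OF F])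
    then show "cinner (ys ! j) v * F (remove_nth j ys) = g (s j)"
      using j ys[of j] by (simp add: g_def)
  qed
  also have "\<dots> = (\<Sum>j<length xs. g j)"
    by (rule sum.reindex_bij_betw[OF permutes_imp_bij[OF s(1)]])
  finally show ?thesis by (simp add: creator_remove_nth g_def)
qed

lemma creator_Cons:
  "creator v F (z # ws) = cinner z v * F ws + (\<Sum>j<length ws. cinner (ws ! j) v * F (z # remove_nth j ws))"
  unfolding creator_remove_nth by (simp add: sum.lessThan_Suc_shift del: sum.lessThan_Suc)

lemma sv_antidual_creator:
  assumes F: "sv_antidual F"
  shows "sv_antidual (creator v F)"
proof (rule sv_antidualI)
  show "mset xs = mset ys \<Longrightarrow> creator v F xs = creator v F ys" for xs ys
    by (rule creator_mset_eq[OF F])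
  show "creator v F ((a *\<^sub>C x + b *\<^sub>C y) # ws) = cnj a * creator v F (x # ws) + cnj b * creator v F (y # ws)"
    for ws a b x y
    unfolding creator_Cons sv_antidual_Cons[OF F]
    by (simp add: cinner_add_left cinner_scaleC_left algebra_simps sum.distrib sum_distrib_left)
qed

lemma comp_norm_bdd_above:
  assumes "F \<in> fock"
  shows "bdd_above {cmod (sv_eval F \<psi>) | \<psi>. (\<forall>(c, xs)\<in>set \<psi>. length xs = n) \<and> sv_norm \<psi> \<le> 1}"
proof -
  obtain C where C: "\<And>\<psi>. cmod (sv_eval F \<psi>) \<le> C * sv_norm \<psi>"
    using assms by (auto simp: fock_def)
  have "cmod (sv_eval F \<psi>) \<le> max C 0" if "sv_norm \<psi> \<le> 1" for \<psi>
    using C[of \<psi>] that sv_norm_nonneg[of \<psi>]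
    by (smt (verit) mult_left_le mult_nonpos_nonneg)
  then show ?thesis unfolding bdd_above_def by blast
qed

lemma sv_eval_le_comp_norm:
  assumes "F \<in> fock" "sv_homogeneous n \<psi>" "sv_norm \<psi> \<le> 1"
  shows "cmod (sv_eval F \<psi>) \<le> comp_norm F n"
  unfolding comp_norm_def
  by (rule cSup_upper[OF _ comp_norm_bdd_above[OF assms(1)]])
    (use assms in \<open>auto simp: sv_homogeneous_def\<close>)

lemma comp_norm_nonneg: "F \<in> fock \<Longrightarrow> 0 \<le> comp_norm F n"
  using sv_eval_le_comp_norm[of F n "[]"] by (simp add: sv_homogeneous_def sv_eval_def sv_norm_def)

lemma sv_eval_le_comp_norm_mult:
  assumes F: "F \<in> fock" and h: "sv_homogeneous n \<psi>"
  shows "cmod (sv_eval F \<psi>) \<le> comp_norm F n * sv_norm \<psi>"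
proof (cases "sv_norm \<psi> = 0")
  case True
  obtain C where "\<And>\<psi>. cmod (sv_eval F \<psi>) \<le> C * sv_norm \<psi>"
    using F by (auto simp: fock_def)
  then show ?thesis using True by (metis mult_zero_right)
next
  case False
  define s where "s = sv_norm \<psi>"
  then have s0: "0 < s" using False sv_norm_nonneg[of \<psi>] by simp
  define \<phi> where "\<phi> = sv_scale (complex_of_real (1 / s)) \<psi>"
  have "sv_norm \<phi> = 1"
    using s0 by (simp add: \<phi>_def sv_norm_scale s_def norm_divide)
  then have "cmod (sv_eval F \<phi>) \<le> comp_norm F n"
    using sv_eval_le_comp_norm[OF F sv_homogeneous_scale[OF h]] by (simp add: \<phi>_def)
  moreover have "cmod (sv_eval F \<phi>) = cmod (sv_eval F \<psi>) / s"
    using s0 by (simp add: \<phi>_def sv_eval_scale norm_mult norm_divide)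
  ultimately show ?thesis using s0 by (simp add: s_def field_simps)
qed

lemma summable_of_summable_of_nat_mult:
  fixes a :: "nat \<Rightarrow> real"
  assumes "\<And>n. 0 \<le> a n" "summable (\<lambda>n. real n * a n)"
  shows "summable a"
proof -
  have "summable (\<lambda>n. real (Suc n) * a (Suc n))"
    using assms(2) summable_Suc_iff[of "\<lambda>n. real n * a n"] by simp
  moreover have "norm (a (Suc n)) \<le> real (Suc n) * a (Suc n)" for n
    using assms(1)[of "Suc n"] by (simp add: mult_le_cancel_right1)
  ultimately have "summable (\<lambda>n. a (Suc n))"
    by (rule summable_comparison_test'[where N=0])
  then show ?thesis
    using summable_Suc_iff[of a] by simp
qed

text \<open>Creation raises the degree by one and, on degree \<open>n\<close>, has norm at most \<open>\<surd>(n+1) \<parallel>v\<parallel>\<close>; so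
  \<open>a(v) \<Phi>\<close> is bounded degree by degree by \<open>\<surd>(n+1) \<parallel>v\<parallel> \<parallel>\<Phi>\<^sub>n\<^sub>+\<^sub>1\<parallel>\<close>, which is square-summable
  when \<open>\<Phi> \<in> \<D>[N\<^sup>1\<^sup>/\<^sup>2]\<close>.\<close>

lemma annihilator_in_fock:
  assumes F: "F \<in> fock" and sm: "summable (\<lambda>n. real n * (comp_norm F n)\<^sup>2)"
  shows "annihilator v F \<in> fock"
proof (rule fockI)
  show "sv_antidual (annihilator v F)"
    using F by (simp add: fock_def sv_antidual_annihilator)
  let ?b = "\<lambda>n. comp_norm F (Suc n) * (sqrt (real (Suc n)) * cnorm v)"
  show "cmod (sv_eval (annihilator v F) \<psi>) \<le> ?b n * sv_norm \<psi>" if h: "sv_homogeneous n \<psi>" for n \<psi>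
  proof -
    have "cmod (sv_eval (annihilator v F) \<psi>) \<le> comp_norm F (Suc n) * sv_norm (sv_creator v \<psi>)"
      unfolding sv_eval_creator[symmetric]
      by (rule sv_eval_le_comp_norm_mult[OF F sv_homogeneous_creator[OF h]])
    also have "sv_norm (sv_creator v \<psi>) \<le> sqrt (real (Suc n)) * cnorm v * sv_norm \<psi>"
      using sv_creator_ip_le[OF h, of v] by (intro sv_norm_sq_le_imp_le) (simp add: sv_norm_sq)
    finally show ?thesis
      using comp_norm_nonneg[OF F, of "Suc n"] by (simp add: mult_left_mono mult.assoc)
  qed
  have "summable (\<lambda>n. (cnorm v)\<^sup>2 * (real (Suc n) * (comp_norm F (Suc n))\<^sup>2))"
    using sm summable_Suc_iff[of "\<lambda>n. real n * (comp_norm F n)\<^sup>2"] by (intro summable_mult) simp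
  moreover have "(?b n)\<^sup>2 = (cnorm v)\<^sup>2 * (real (Suc n) * (comp_norm F (Suc n))\<^sup>2)" for n
    by (simp add: power_mult_distrib del: of_nat_Suc)
  ultimately show "summable (\<lambda>n. (?b n)\<^sup>2)" by simp
qed

lemma creator_in_fock:
  assumes F: "F \<in> fock" and sm: "summable (\<lambda>n. real n * (comp_norm F n)\<^sup>2)"
  shows "creator v F \<in> fock"
proof (rule fockI)
  show "sv_antidual (creator v F)"
    using F by (simp add: fock_def sv_antidual_creator)
  let ?b = "\<lambda>n. comp_norm F (n - 1) * (sqrt (real n) * cnorm v)"
  show "cmod (sv_eval (creator v F) \<psi>) \<le> ?b n * sv_norm \<psi>" if h: "sv_homogeneous n \<psi>" for n \<psi>
  proof (cases n)
    case 0
    then have "sv_annihilator v \<psi> = []"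
      using h sv_annihilator_homogeneous_0 by simp
    then have "sv_eval (creator v F) \<psi> = 0"
      using sv_eval_annihilator[of F v \<psi>] by (simp add: sv_eval_def)
    then show ?thesis using 0 by simp
  next
    case (Suc m)
    then have hm: "sv_homogeneous m (sv_annihilator v \<psi>)"
      using h by (simp add: sv_homogeneous_annihilator)
    have "cmod (sv_eval (creator v F) \<psi>) \<le> comp_norm F m * sv_norm (sv_annihilator v \<psi>)"
      unfolding sv_eval_annihilator[symmetric] by (rule sv_eval_le_comp_norm_mult[OF F hm])
    also have "sv_norm (sv_annihilator v \<psi>) \<le> sqrt (real n) * cnorm v * sv_norm \<psi>"
      using sv_annihilator_ip_le[OF h, of v] by (intro sv_norm_sq_le_imp_le) (simp add: sv_norm_sq)
    finally show ?thesis
      using comp_norm_nonneg[OF F, of m] Suc by (simp add: mult_left_mono mult.assoc)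
  qed
  have "summable (\<lambda>n. (comp_norm F n)\<^sup>2)"
    by (rule summable_of_summable_of_nat_mult[OF _ sm]) simp
  then have "summable (\<lambda>n. (cnorm v)\<^sup>2 * (real n * (comp_norm F n)\<^sup>2 + (comp_norm F n)\<^sup>2))"
    by (intro summable_mult summable_add[OF sm])
  moreover have "(?b (Suc n))\<^sup>2 = (cnorm v)\<^sup>2 * (real n * (comp_norm F n)\<^sup>2 + (comp_norm F n)\<^sup>2)" for n
    by (simp add: power_mult_distrib algebra_simps)
  ultimately have "summable (\<lambda>n. (?b (Suc n))\<^sup>2)"
    by simp
  then show "summable (\<lambda>n. (?b n)\<^sup>2)"
    using summable_Suc_iff[of "\<lambda>n. (?b n)\<^sup>2"] by simp
qed

definition orthonormal_seq :: "(nat \<Rightarrow> 'v::complex_inner_space) \<Rightarrow> bool" where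
  "orthonormal_seq e \<longleftrightarrow> (\<forall>i j. cinner (e i) (e j) = (if i = j then 1 else 0))"

lemma orthonormal_list_distinct: "orthonormal_list es \<Longrightarrow> distinct es"
  unfolding orthonormal_list_def distinct_conv_nth by (metis one_neq_zero)

lemma orth_proj_in_cspan:
  assumes "orthonormal_list es"
  shows "orth_proj es w \<in> cspan (set es)"
proof -
  have "orth_proj es w = (\<Sum>s\<in>set es. cinner s w *\<^sub>C s)"
    unfolding orth_proj_def
    by (rule sum.reindex_bij_betw[OF bij_betw_nth[OF orthonormal_list_distinct[OF assms] refl refl]])
  then show ?thesis
    unfolding cspan_def mem_Collect_eq by (intro exI[of _ "set es"] exI[of _ "\<lambda>s. cinner s w"]) simp
qed

lemma orthonormal_list_snoc_exists:
  assumes "infinite_dimensional TYPE('v::complex_inner_space)" "orthonormal_list (es :: 'v list)"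
  shows "\<exists>e. orthonormal_list (es @ [e])"
proof -
  obtain w where w: "w \<notin> cspan (set es)"
    using assms(1) unfolding infinite_dimensional_def by blast
  obtain r where r: "orthonormal_list (es @ r)" "orth_proj (es @ r) w = w"
    using orthonormal_list_extend_fixed[OF assms(2)] by blast
  show ?thesis
  proof (cases r)
    case Nil
    then show ?thesis using r w orth_proj_in_cspan[OF assms(2), of w] by simp
  next
    case (Cons e r')
    then show ?thesis
      using r(1) orthonormal_list_appendD[of "es @ [e]" r'] by auto
  qed
qed

lemma orthonormal_seq_exists:
  assumes "infinite_dimensional TYPE('v::complex_inner_space)"
  obtains e :: "nat \<Rightarrow> 'v::complex_inner_space" where "orthonormal_seq e"
proof -
  obtain next_vec :: "'v list \<Rightarrow> 'v"
    where next_vec: "\<And>es. orthonormal_list es \<Longrightarrow> orthonormal_list (es @ [next_vec es])"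
    using orthonormal_list_snoc_exists[OF assms] by metis
  define L where "L = rec_nat [] (\<lambda>_ es. es @ [next_vec es])"
  define e where "e k = next_vec (L k)" for k
  have L: "L n = map e [0..<n]" for n
    by (induction n) (simp_all add: L_def e_def)
  have "orthonormal_list (L n)" for n
    by (induction n) (simp_all add: L_def next_vec)
  then have "orthonormal_list (map e [0..<n])" for n
    by (simp add: L)
  then have "cinner (e i) (e j) = (if i = j then 1 else 0)" for i j
    using less_Suc_eq_le unfolding orthonormal_list_def
    by (metis length_map length_upt diff_zero max.cobounded1 max.cobounded2 nth_map_upt add_0)
  then show ?thesis by (intro that[of e]) (simp add: orthonormal_seq_def)
qed

lemma bessel_inequality_list:
  assumes "orthonormal_list es"
  shows "(\<Sum>k<length es. (cmod (cinner (es ! k) v))\<^sup>2) \<le> (cnorm v)\<^sup>2"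
proof -
  define p where "p = orth_proj es v"
  define X where "X = (\<Sum>k<length es. (cmod (cinner (es ! k) v))\<^sup>2)"
  have sq: "cinner (es ! k) v * cinner v (es ! k) = complex_of_real ((cmod (cinner (es ! k) v))\<^sup>2)" for k
    using complex_norm_square[of "cinner (es ! k) v"] cinner_cnj_commute[of v "es ! k"] by simp
  have vp: "cinner v p = complex_of_real X"
    unfolding p_def orth_proj_def X_def by (simp add: cinner_sum_scaleC_right sq)
  have "cinner p p = (\<Sum>k<length es. cinner (es ! k) v * cinner p (es ! k))"
    using cinner_sum_scaleC_right[of p "\<lambda>k. cinner (es ! k) v" "\<lambda>k. es ! k" "{..<length es}"]
    by (simp add: p_def orth_proj_def)
  also have "\<dots> = complex_of_real X"
    unfolding X_def using assms
    by (simp add: p_def cinner_cnj_commute[of "orth_proj es v"] cinner_orth_proj cnj_cinner sq)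
  finally have pp: "cinner p p = complex_of_real X" .
  have "cinner (v - p) (v - p) = cinner v v - complex_of_real X"
    using vp pp cinner_cnj_commute[of p v]
    by (simp add: cinner_diff_left cinner_diff_right)
  then have "0 \<le> (cnorm v)\<^sup>2 - X"
    using cinner_ge_zero[of "v - p"] by (simp add: cinner_self_eq_cnorm)
  then show ?thesis by (simp add: X_def)
qed

lemma bessel_summable:
  assumes "orthonormal_seq e"
  shows "summable (\<lambda>k. (cmod (cinner (e k) v))\<^sup>2)"
proof (rule summableI_nonneg_bounded)
  have "orthonormal_list (map e [0..<n])" for n
    using assms by (simp add: orthonormal_seq_def orthonormal_list_def)
  then show "(\<Sum>k<n. (cmod (cinner (e k) v))\<^sup>2) \<le> (cnorm v)\<^sup>2" for n
    using bessel_inequality_list[of "map e [0..<n]" v] by simp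
qed simp

definition sv_functional :: "(nat \<Rightarrow> 'v::complex_inner_space sv) \<Rightarrow> 'v list \<Rightarrow> complex" where
  "sv_functional G xs = sv_ip [(1, xs)] (G (length xs))"

lemma sv_antidual_sv_functional: "sv_antidual (sv_functional G)"
proof (rule sv_antidualI)
  show "sv_functional G xs = sv_functional G ys" if m: "mset xs = mset ys" for xs ys
  proof -
    have "length xs = length ys" using m by (metis size_mset)
    then show ?thesis
      unfolding sv_functional_def sv_ip_def by (simp add: mono_ip_mset_left[OF m])
  qed
  show "sv_functional G ((a *\<^sub>C x + b *\<^sub>C y) # ws) =
      cnj a * sv_functional G (x # ws) + cnj b * sv_functional G (y # ws)" for ws a b x y
    unfolding sv_functional_def sv_ip_def
    by (simp add: mono_ip_Cons_antilinear case_prod_unfold algebra_simps sum_list_addf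
        sum_list_const_mult)
qed

lemma sv_eval_sv_functional: "sv_homogeneous n \<psi> \<Longrightarrow> sv_eval (sv_functional G) \<psi> = sv_ip \<psi> (G n)"
  unfolding sv_eval_def sv_ip_def sv_functional_def sv_homogeneous_def
  by (intro arg_cong[where f=sum_list] map_cong refl)
    (auto simp: sum_list_const_mult case_prod_unfold mult.assoc)

lemma sv_functional_in_fock:
  assumes "summable (\<lambda>n. (sv_norm (G n))\<^sup>2)"
  shows "sv_functional G \<in> fock"
proof (rule fockI[OF sv_antidual_sv_functional _ assms])
  show "cmod (sv_eval (sv_functional G) \<psi>) \<le> sv_norm (G n) * sv_norm \<psi>"
    if "sv_homogeneous n \<psi>" for n \<psi>
    using sv_ip_cauchy_schwarz[of \<psi> "G n"] by (simp add: sv_eval_sv_functional[OF that] mult.commute)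
qed

lemma annihilator_sv_functional:
  "annihilator v (sv_functional G) = sv_functional (\<lambda>n. sv_annihilator v (G (Suc n)))"
proof
  fix xs
  have "annihilator v (sv_functional G) xs = sv_ip (sv_creator v [(1, xs)]) (G (Suc (length xs)))"
    by (simp add: annihilator_def sv_functional_def sv_creator_def)
  then show "annihilator v (sv_functional G) xs = sv_functional (\<lambda>n. sv_annihilator v (G (Suc n))) xs"
    by (simp add: sv_functional_def sv_ip_creator_left)
qed

text \<open>For \<open>xs = []\<close> both sides vanish, so the junk value \<open>0 - 1 = 0\<close> does no harm.\<close>

lemma creator_sv_functional:
  "creator v (sv_functional G) = sv_functional (\<lambda>n. sv_creator v (G (n - 1)))"
proof
  fix xs
  have h: "sv_homogeneous (length xs - 1) (sv_annihilator v [(1, xs)])"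
    unfolding sv_homogeneous_def sv_annihilator_def by auto
  have "creator v (sv_functional G) xs = sv_eval (creator v (sv_functional G)) [(1, xs)]"
    by (simp add: sv_eval_def)
  also have "\<dots> = sv_ip (sv_annihilator v [(1, xs)]) (G (length xs - 1))"
    by (simp add: sv_eval_annihilator[symmetric] sv_eval_sv_functional[OF h])
  also have "\<dots> = sv_functional (\<lambda>n. sv_creator v (G (n - 1))) xs"
    by (simp add: sv_ip_annihilator_left sv_functional_def)
  finally show "creator v (sv_functional G) xs = sv_functional (\<lambda>n. sv_creator v (G (n - 1))) xs" .
qed

lemma sv_norm_le_comp_norm_sv_functional:
  assumes F: "sv_functional G \<in> fock" and h: "sv_homogeneous n (G n)"
  shows "sv_norm (G n) \<le> comp_norm (sv_functional G) n"
proof (cases "sv_norm (G n) = 0")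
  case True
  then show ?thesis using comp_norm_nonneg[OF F] by simp
next
  case False
  define s where "s = sv_norm (G n)"
  then have s0: "0 < s" using False sv_norm_nonneg[of "G n"] by simp
  define \<psi> where "\<psi> = sv_scale (complex_of_real (1 / s)) (G n)"
  have "sv_homogeneous n \<psi>"
    unfolding \<psi>_def by (rule sv_homogeneous_scale[OF h])
  moreover have "sv_norm \<psi> = 1"
    using s0 by (simp add: \<psi>_def sv_norm_scale s_def norm_divide)
  ultimately have "cmod (sv_eval (sv_functional G) \<psi>) \<le> comp_norm (sv_functional G) n"
    by (intro sv_eval_le_comp_norm[OF F]) simp_all
  moreover have "sv_eval (sv_functional G) \<psi> = complex_of_real (1 / s) * complex_of_real (s\<^sup>2)"
    unfolding \<psi>_def sv_eval_sv_functional[OF sv_homogeneous_scale[OF h]] sv_ip_scale_left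
    using sv_ip_self_eq_Re[of "G n"] sv_norm_sq[of "G n"] by (simp add: s_def)
  then have "cmod (sv_eval (sv_functional G) \<psi>) = s"
    using s0 by (simp add: power2_eq_square)
  ultimately show ?thesis by (simp add: s_def)
qed

section \<open>The witness\<close>

definition fock_witness_coeff :: "nat \<Rightarrow> real" where
  "fock_witness_coeff n = 1 / (real n * sqrt (fact n))"

definition fock_witness :: "(nat \<Rightarrow> 'v::complex_inner_space) \<Rightarrow> nat \<Rightarrow> 'v sv" where
  "fock_witness e n = [(complex_of_real (fock_witness_coeff n), replicate n (e n))]"

lemma fock_witness_coeff_sq: "(fock_witness_coeff n)\<^sup>2 * fact n = inverse (real n ^ 2)"
proof (cases "n = 0")
  case False
  have "0 < (fact n :: real)" by simp
  then show ?thesis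
    using False by (simp add: fock_witness_coeff_def power_divide power_mult_distrib field_simps)
qed (simp add: fock_witness_coeff_def)

lemma sv_homogeneous_fock_witness: "sv_homogeneous n (fock_witness e n)"
  by (simp add: sv_homogeneous_def fock_witness_def)

lemma sv_ip_replicate:
  "sv_ip (replicate m (c, xs)) (replicate m (c, xs)) = of_nat m * (of_nat m * (cnj c * c * mono_ip xs xs))"
  by (simp add: sv_ip_def sum_list_replicate)

lemma sv_norm_sq_fock_witness:
  assumes "orthonormal_seq e"
  shows "(sv_norm (fock_witness e n))\<^sup>2 = inverse (real n ^ 2)"
proof -
  have "sv_ip (fock_witness e n) (fock_witness e n) =
      complex_of_real ((fock_witness_coeff n)\<^sup>2 * fact n)"
    using sv_ip_replicate[of 1 "complex_of_real (fock_witness_coeff n)" "replicate n (e n)"] assms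
    by (simp add: fock_witness_def mono_ip_replicate orthonormal_seq_def power2_eq_square)
  then have "sv_ip (fock_witness e n) (fock_witness e n) = complex_of_real (inverse (real n ^ 2))"
    by (simp only: fock_witness_coeff_sq)
  then show ?thesis
    by (simp only: sv_norm_sq Re_complex_of_real)
qed

lemma sv_annihilator_fock_witness:
  "sv_annihilator v (fock_witness e n) =
     replicate n (complex_of_real (fock_witness_coeff n) * cinner v (e n), replicate (n - 1) (e n))"
proof -
  have "map (\<lambda>j. (complex_of_real (fock_witness_coeff n) * cinner v (replicate n (e n) ! j),
        remove_nth j (replicate n (e n)))) [0..<n] =
      map (\<lambda>j. (complex_of_real (fock_witness_coeff n) * cinner v (e n), replicate (n - 1) (e n))) [0..<n]"
    by (rule map_cong) (auto simp: remove_nth_replicate)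
  then show ?thesis
    by (simp add: sv_annihilator_def fock_witness_def map_replicate_const)
qed

lemma sv_norm_sq_annihilator_fock_witness:
  assumes "orthonormal_seq e"
  shows "(sv_norm (sv_annihilator v (fock_witness e n)))\<^sup>2 \<le> (cmod (cinner (e n) v))\<^sup>2"
proof (cases n)
  case 0
  then show ?thesis by (simp add: sv_annihilator_fock_witness sv_norm_sq)
next
  case (Suc k)
  define c where "c = complex_of_real (fock_witness_coeff n) * cinner v (e n)"
  have "cmod (cinner v (e n)) = cmod (cinner (e n) v)"
    by (metis cnj_cinner complex_mod_cnj)
  then have cc: "cnj c * c = complex_of_real ((fock_witness_coeff n)\<^sup>2 * (cmod (cinner (e n) v))\<^sup>2)"
    using complex_norm_square[of c] by (simp add: c_def norm_mult power_mult_distrib mult.commute)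
  have "cinner (e n) (e n) = 1"
    using assms by (simp add: orthonormal_seq_def)
  then have "sv_ip (sv_annihilator v (fock_witness e n)) (sv_annihilator v (fock_witness e n)) =
      complex_of_real (real n * real n * ((fock_witness_coeff n)\<^sup>2 * (cmod (cinner (e n) v))\<^sup>2) * fact k)"
    unfolding sv_annihilator_fock_witness c_def[symmetric] sv_ip_replicate cc
    using Suc by (simp add: mono_ip_replicate)
  then have norm: "(sv_norm (sv_annihilator v (fock_witness e n)))\<^sup>2 =
      (cmod (cinner (e n) v))\<^sup>2 * (real n * real n * (fock_witness_coeff n)\<^sup>2 * fact k)"
    unfolding sv_norm_sq by (simp add: algebra_simps)
  have "real n * real n * (fock_witness_coeff n)\<^sup>2 * fact k = fact k / fact n"
    using Suc by (simp add: fock_witness_coeff_def power_divide power_mult_distrib power2_eq_square)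
  also have "\<dots> \<le> 1"
    using Suc by (simp add: fact_mono)
  finally show ?thesis
    unfolding norm by (simp add: mult_left_le)
qed

lemma fock_witness_in_fock:
  assumes "orthonormal_seq e"
  shows "sv_functional (fock_witness e) \<in> fock"
  using inverse_power_summable[of 2, where 'a=real]
  by (simp add: sv_functional_in_fock sv_norm_sq_fock_witness[OF assms])

lemma annihilator_fock_witness_in_fock:
  assumes "orthonormal_seq e"
  shows "annihilator v (sv_functional (fock_witness e)) \<in> fock"
  unfolding annihilator_sv_functional
proof (rule sv_functional_in_fock)
  have "summable (\<lambda>n. (cmod (cinner (e (Suc n)) v))\<^sup>2)"
    using bessel_summable[OF assms, of v] summable_Suc_iff[of "\<lambda>k. (cmod (cinner (e k) v))\<^sup>2"] by simp
  then show "summable (\<lambda>n. (sv_norm (sv_annihilator v (fock_witness e (Suc n))))\<^sup>2)"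
    by (rule summable_comparison_test'[where N=0])
      (simp add: sv_norm_sq_annihilator_fock_witness[OF assms])
qed

lemma sv_norm_sq_creator:
  "(sv_norm (sv_creator v \<psi>))\<^sup>2 = (sv_norm (sv_annihilator v \<psi>))\<^sup>2 + (cnorm v)\<^sup>2 * (sv_norm \<psi>)\<^sup>2"
  unfolding sv_norm_sq sv_ip_creator_self by (simp add: cinner_self_eq_cnorm)

lemma creator_fock_witness_in_fock:
  assumes "orthonormal_seq e"
  shows "creator v (sv_functional (fock_witness e)) \<in> fock"
  unfolding creator_sv_functional
proof (rule sv_functional_in_fock)
  define g where "g n = (cmod (cinner (e n) v))\<^sup>2 + (cnorm v)\<^sup>2 * inverse (real n ^ 2)" for n
  have "summable (\<lambda>n. inverse (real n ^ 2))"
    using inverse_power_summable[of 2, where 'a=real] by simp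
  then have "summable g"
    unfolding g_def by (rule summable_add[OF bessel_summable[OF assms] summable_mult])
  then have "summable (\<lambda>n. g (n - 1))"
    using summable_Suc_iff[of "\<lambda>n. g (n - 1)"] by simp
  moreover have "norm ((sv_norm (sv_creator v (fock_witness e (n - 1))))\<^sup>2) \<le> g (n - 1)" for n
    using sv_norm_sq_annihilator_fock_witness[OF assms, of v "n - 1"]
    unfolding sv_norm_sq_creator g_def sv_norm_sq_fock_witness[OF assms] by simp
  ultimately show "summable (\<lambda>n. (sv_norm (sv_creator v (fock_witness e (n - 1))))\<^sup>2)"
    by (rule summable_comparison_test'[where N=0])
qed

lemma fock_witness_notin_dom_N_half:
  assumes "orthonormal_seq e"
  shows "sv_functional (fock_witness e) \<notin> dom_N_half"
proof
  let ?F = "sv_functional (fock_witness e)"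
  assume "?F \<in> dom_N_half"
  then have "summable (\<lambda>n. real n * (comp_norm ?F n)\<^sup>2)"
    by (simp add: dom_N_half_def)
  moreover have "norm (inverse (real n)) \<le> real n * (comp_norm ?F n)\<^sup>2" for n
  proof -
    have "sv_norm (fock_witness e n) \<le> comp_norm ?F n"
      by (rule sv_norm_le_comp_norm_sv_functional[OF fock_witness_in_fock[OF assms]
            sv_homogeneous_fock_witness])
    then have "(sv_norm (fock_witness e n))\<^sup>2 \<le> (comp_norm ?F n)\<^sup>2"
      by (rule power_mono[OF _ sv_norm_nonneg])
    then have "real n * (sv_norm (fock_witness e n))\<^sup>2 \<le> real n * (comp_norm ?F n)\<^sup>2"
      by (rule mult_left_mono) simp
    moreover have "real n * inverse (real n ^ 2) = inverse (real n)"
      by (cases "n = 0") (simp_all add: power2_eq_square)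
    ultimately show ?thesis
      using sv_norm_sq_fock_witness[OF assms, of n] by simp
  qed
  ultimately have "summable (\<lambda>n. inverse (real n))"
    by (rule summable_comparison_test'[where N=0])
  then show False
    using not_summable_harmonic[where 'a=real] by simp
qed

lemma dom_N_half_subset:
  assumes "F \<in> dom_N_half"
  shows "F \<in> dom_creator v \<inter> dom_annihilator v"
  using assms creator_in_fock[of F] annihilator_in_fock[of F]
  by (simp add: dom_N_half_def dom_creator_def dom_annihilator_def)

theorem theorem3:
  assumes "infinite_dimensional TYPE('v::complex_hilbert_space)"
  shows "(dom_N_half :: ('v list \<Rightarrow> complex) set)
           \<subset> (\<Inter>v::'v. dom_creator v \<inter> dom_annihilator v)"
proof
  show "(dom_N_half :: ('v list \<Rightarrow> complex) set) \<subseteq> (\<Inter>v::'v. dom_creator v \<inter> dom_annihilator v)"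
    using dom_N_half_subset by blast
  obtain e :: "nat \<Rightarrow> 'v" where e: "orthonormal_seq e"
    using orthonormal_seq_exists[OF assms] by blast
  have "sv_functional (fock_witness e) \<in> (\<Inter>v::'v. dom_creator v \<inter> dom_annihilator v)"
    using fock_witness_in_fock[OF e] creator_fock_witness_in_fock[OF e]
      annihilator_fock_witness_in_fock[OF e]
    by (simp add: dom_creator_def dom_annihilator_def)
  then show "(dom_N_half :: ('v list \<Rightarrow> complex) set) \<noteq> (\<Inter>v::'v. dom_creator v \<inter> dom_annihilator v)"
    using fock_witness_notin_dom_N_half[OF e] by blast
qed

end
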